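(* Let $\mathfrak g$ be a real Lie algebra and $\mathfrak h\subset\mathfrak g$ a Lie subalgebra. Let $\mathfrak h^\perp:=\{f\in\mathfrak g^*\mid f(\mathfrak h)=0\}$, $r_{\mathfrak g,\mathfrak h}:=\min_{f\in\mathfrak h^\perp}\dim\mathfrak g_f$, and $\mathfrak h^\perp_{\min}:=\{f\in\mathfrak h^\perp\mid\dim\mathfrak g_f=r_{\mathfrak g,\mathfrak h}\}$. Then for every $f_0\in\mathfrak h^\perp_{\min}$ one has $[\mathfrak g_{f_0},\mathfrak g_{f_0}]\subset\mathfrak h_{f_0}$.
   Context: $\mathfrak g$ acts on $\mathfrak g^*$ by the coadjoint action; $\mathfrak g_f:=\{Y\in\mathfrak g\mid Yf=0\}$ is the stabilizer of $f$ in $\mathfrak g$ and $\mathfrak h_f:=\mathfrak g_f\cap\mathfrak h$. *)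

theory Defs
  imports "HOL-Analysis.Analysis"
begin

definition lie_algebra :: "('a::euclidean_space \<Rightarrow> 'a \<Rightarrow> 'a) \<Rightarrow> bool" where
  "lie_algebra br \<longleftrightarrow> bilinear br \<and> (\<forall>x. br x x = 0) \<and>
     (\<forall>x y z. br x (br y z) + br y (br z x) + br z (br x y) = 0)"

definition lie_subalgebra :: "('a::euclidean_space \<Rightarrow> 'a \<Rightarrow> 'a) \<Rightarrow> 'a set \<Rightarrow> bool" where
  "lie_subalgebra br h \<longleftrightarrow> subspace h \<and> (\<forall>x\<in>h. \<forall>y\<in>h. br x y \<in> h)"

definition coadj :: "('a::euclidean_space \<Rightarrow> 'a \<Rightarrow> 'a) \<Rightarrow> 'a \<Rightarrow> ('a \<Rightarrow> real) \<Rightarrow> ('a \<Rightarrow> real)" where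
  "coadj br Y f = (\<lambda>X. - f (br Y X))"

definition stab :: "('a::euclidean_space \<Rightarrow> 'a \<Rightarrow> 'a) \<Rightarrow> ('a \<Rightarrow> real) \<Rightarrow> 'a set" where
  "stab br f = {Y. coadj br Y f = (\<lambda>_. 0)}"

definition annih :: "'a::euclidean_space set \<Rightarrow> ('a \<Rightarrow> real) set" where
  "annih h = {f. linear f \<and> (\<forall>x\<in>h. f x = 0)}"

definition r_gh :: "('a::euclidean_space \<Rightarrow> 'a \<Rightarrow> 'a) \<Rightarrow> 'a set \<Rightarrow> nat" where
  "r_gh br h = Min ((\<lambda>f. dim (stab br f)) ` annih h)"

definition annih_min :: "('a::euclidean_space \<Rightarrow> 'a \<Rightarrow> 'a) \<Rightarrow> 'a set \<Rightarrow> ('a \<Rightarrow> real) set" where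
  "annih_min br h = {f \<in> annih h. dim (stab br f) = r_gh br h}"

end

theory Submission imports Defs begin

text \<open>Suppose \<open>l([X,Y]) \<noteq> 0\<close> for some \<open>X, Y\<close> in the stabilizer \<open>g_f0\<close> and some
  \<open>l\<close> vanishing on \<open>h\<close>, and perturb \<open>f0\<close> to \<open>ft = f0 + t l\<close>, which still vanishes on \<open>h\<close>.
  Since \<open>Y \<in> g_f0\<close>, the linear form \<open>q v = l([v,Y])\<close> vanishes on \<open>g_ft\<close> for every
  \<open>t \<noteq> 0\<close>, while \<open>q X \<noteq> 0\<close>. As \<open>g_ft\<close> is the kernel of \<open>v \<mapsto> ft([v,-])\<close>, which
  depends linearly on \<open>t\<close>, lower semicontinuity of kernel dimension bounds \<open>dim g_ft\<close>
  for small \<open>t\<close> by \<open>dim (g_f0 \<inter> ker q) < dim g_f0\<close>, contradicting minimality.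
  So every functional vanishing on \<open>h\<close> kills \<open>[g_f0, g_f0]\<close>, which therefore lies
  in \<open>h\<close>; it lies in \<open>g_f0\<close> by the Jacobi identity.\<close>

lemma dim_kernel_perturbation_less:
  fixes a b :: "'a::euclidean_space \<Rightarrow> 'b::euclidean_space" and q :: "'a \<Rightarrow> real"
  assumes la: "linear a" and lb: "linear b" and lq: "linear q"
    and ay: "a y = 0" and qy: "q y \<noteq> 0"
    and q_vanishes: "\<And>t v. t \<noteq> 0 \<Longrightarrow> a v + t *\<^sub>R b v = 0 \<Longrightarrow> q v = 0"
  obtains t where "t \<noteq> 0" "dim {v. a v + t *\<^sub>R b v = 0} < dim {v. a v = 0}"
proof -
  define K where "K = {v. a v = 0}"
  define K0 where "K0 = {v. a v = 0 \<and> q v = 0}"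
  define V where "V = {v. \<forall>x\<in>K0. orthogonal x v}"
  text \<open>\<open>V\<close> is a complement of \<open>K0\<close>; for small \<open>t\<close> the kernel of \<open>a + t b\<close> meets it
    only in \<open>0\<close>, since \<open>v \<mapsto> (a v, q v)\<close> is bounded below on \<open>V\<close>.\<close>
  have sK: "subspace K" and sK0: "subspace K0"
    unfolding K_def K0_def using la lq
    by (simp_all add: linear_subspace_kernel Collect_conj_eq subspace_inter)
  have sV: "subspace V"
    using subspace_orthogonal_comp[of K0] unfolding V_def orthogonal_comp_def by simp
  have dV: "dim V + dim K0 = DIM('a)"
    using dim_subspace_orthogonal_to_vectors[OF sK0 subspace_UNIV] unfolding V_def by simp
  have "K0 \<subset> K"
    using ay qy unfolding K_def K0_def by auto
  then have dK0: "dim K0 < dim K"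
    using sK sK0 by (metis dim_psubset span_eq_iff)
  have "bounded_linear (\<lambda>v. (a v, q v))"
    using la lq by (simp add: linear_conv_bounded_linear bounded_linear_Pair)
  moreover have "\<forall>v\<in>V. (a v, q v) = 0 \<longrightarrow> v = 0"
    unfolding V_def K0_def orthogonal_def by (auto simp: zero_prod_def)
  ultimately have "\<exists>m>0. \<forall>v\<in>V. m * norm v \<le> norm (a v, q v)"
    by (rule injective_imp_isometric[OF closed_subspace[OF sV] sV])
  then obtain m where m: "m > 0" "\<And>v. v \<in> V \<Longrightarrow> m * norm v \<le> norm (a v, q v)"
    by blast
  obtain B where B: "B > 0" "\<And>x. norm (b x) \<le> B * norm x"
    using linear_bounded_pos[OF lb] by blast
  define t where "t = m / (2 * B)"
  have t: "t > 0" unfolding t_def using m B by simp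
  define Kt where "Kt = {v. a v + t *\<^sub>R b v = 0}"
  have sKt: "subspace Kt"
    unfolding Kt_def by (rule linear_subspace_kernel) (intro module_hom_add la module_hom_scale lb)
  have "v = 0" if v: "v \<in> Kt" "v \<in> V" for v
  proof -
    have av: "a v = - t *\<^sub>R b v" using v(1) unfolding Kt_def by (simp add: eq_neg_iff_add_eq_0)
    have "q v = 0" using q_vanishes[of t v] t v(1) unfolding Kt_def by simp
    then have "m * norm v \<le> norm (a v)" using m(2)[OF v(2)] by (simp add: norm_Pair)
    also have "\<dots> \<le> t * (B * norm v)" using av B(2)[of v] t by (simp add: mult_left_mono)
    also have "\<dots> = m / 2 * norm v" unfolding t_def using B by simp
    finally show "v = 0" using m(1) by simp
  qed
  then have "Kt \<inter> V = {0}" using sKt sV subspace_0 by blast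
  then have "dim Kt + dim V \<le> DIM('a)"
    using dim_sums_Int[OF sKt sV] dim_subset_UNIV[of "{x + z |x z. x \<in> Kt \<and> z \<in> V}"] by simp
  then have "dim Kt < dim K" using dV dK0 by simp
  then show ?thesis using that[of t] t unfolding Kt_def K_def by simp
qed

lemma lie_algebra_skew:
  assumes "lie_algebra br"
  shows "br x y = - br y x"
proof -
  have bl: "bilinear br" and alt: "\<And>x. br x x = 0"
    using assms unfolding lie_algebra_def by auto
  have "br x x + br x y + br y x + br y y = 0"
    using alt[of "x + y"] by (simp add: bilinear_ladd[OF bl] bilinear_radd[OF bl] algebra_simps)
  then show ?thesis using alt by (simp add: eq_neg_iff_add_eq_0)
qed

lemma mem_stab_iff: "Y \<in> stab br f \<longleftrightarrow> (\<forall>X. f (br Y X) = 0)"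
  unfolding stab_def coadj_def by (auto simp: fun_eq_iff)

lemma linear_form_bracket_left: "linear f \<Longrightarrow> bilinear br \<Longrightarrow> linear (\<lambda>w. f (br w X))"
  unfolding bilinear_def by (auto intro: linear_compose[unfolded o_def])

lemma linear_form_bracket_right: "linear f \<Longrightarrow> bilinear br \<Longrightarrow> linear (\<lambda>X. f (br w X))"
  unfolding bilinear_def by (auto intro: linear_compose[unfolded o_def])

text \<open>The Riesz representative of \<open>X \<mapsto> f([w,X])\<close>; it exhibits \<open>g_f\<close> as the kernel
  of a linear endomorphism of the Euclidean space.\<close>

definition stab_vec :: "('a::euclidean_space \<Rightarrow> 'a \<Rightarrow> 'a) \<Rightarrow> ('a \<Rightarrow> real) \<Rightarrow> 'a \<Rightarrow> 'a" where
  "stab_vec br f w = (\<Sum>i\<in>Basis. f (br w i) *\<^sub>R i)"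

lemma linear_stab_vec:
  assumes "linear f" and "bilinear br"
  shows "linear (stab_vec br f)"
proof -
  note L = linear_form_bracket_left[OF assms]
  show ?thesis
    unfolding stab_vec_def
    by (rule linearI) (simp_all add: linear_add[OF L] linear_scale[OF L] scaleR_add_left
        sum.distrib scaleR_sum_right)
qed

lemma stab_vec_add_scaled:
  "stab_vec br (\<lambda>x. f x + t * l x) w = stab_vec br f w + t *\<^sub>R stab_vec br l w"
  unfolding stab_vec_def by (simp add: scaleR_add_left sum.distrib scaleR_sum_right)

lemma stab_eq_kernel_stab_vec:
  assumes lf: "linear f" and bl: "bilinear br"
  shows "stab br f = {w. stab_vec br f w = 0}"
proof -
  have "stab_vec br f w \<bullet> i = f (br w i)" if "i \<in> Basis" for w i
    unfolding stab_vec_def using that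
    by (simp add: inner_sum_left inner_Basis if_distrib cong: if_cong)
  then have "stab_vec br f w = 0 \<longleftrightarrow> (\<forall>i\<in>Basis. f (br w i) = 0)" for w
    by (metis euclidean_all_zero_iff inner_zero_left)
  moreover have "(\<forall>i\<in>Basis. f (br w i) = 0) \<longleftrightarrow> (\<forall>X. f (br w X) = 0)" for w
    using linear_eq_stdbasis[OF linear_form_bracket_right[OF lf bl] linear_zero]
    by (auto simp: fun_eq_iff)
  ultimately show ?thesis by (auto simp: mem_stab_iff)
qed

lemma subspace_stab: "linear f \<Longrightarrow> bilinear br \<Longrightarrow> subspace (stab br f)"
  by (simp add: stab_eq_kernel_stab_vec linear_subspace_kernel linear_stab_vec)

lemma stab_bracket_mem:
  assumes lie: "lie_algebra br" and lf: "linear f"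
    and X: "X \<in> stab br f" and Y: "Y \<in> stab br f"
  shows "br X Y \<in> stab br f"
proof -
  have "br (br X Y) Z = br X (br Y Z) + br Y (br Z X)" for Z
  proof -
    have "br X (br Y Z) + br Y (br Z X) + br Z (br X Y) = 0"
      using lie unfolding lie_algebra_def by blast
    then show ?thesis
      using lie_algebra_skew[OF lie, of Z "br X Y"] by (simp add: algebra_simps eq_neg_iff_add_eq_0)
  qed
  then show ?thesis
    using X Y by (simp add: mem_stab_iff linear_add[OF lf])
qed

lemma annih_add_scaled:
  "f \<in> annih h \<Longrightarrow> l \<in> annih h \<Longrightarrow> (\<lambda>x. f x + t * l x) \<in> annih h"
  unfolding annih_def using module_hom_add[OF _ module_hom_scale, of f l t] by auto

lemma r_gh_le_dim_stab: "f \<in> annih h \<Longrightarrow> r_gh br h \<le> dim (stab br f)"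
proof -
  have "finite ((\<lambda>f. dim (stab br f)) ` annih h)"
    by (rule finite_subset[of _ "{..DIM('a)}"]) (auto intro: dim_subset_UNIV)
  then show "f \<in> annih h \<Longrightarrow> r_gh br h \<le> dim (stab br f)"
    unfolding r_gh_def by (intro Min_le) auto
qed

lemma annih_vanishes_on_stab_bracket:
  assumes lie: "lie_algebra br" and f0: "f0 \<in> annih_min br h" and l: "l \<in> annih h"
    and X: "X \<in> stab br f0" and Y: "Y \<in> stab br f0"
  shows "l (br X Y) = 0"
proof (rule ccontr)
  assume lXY: "l (br X Y) \<noteq> 0"
  have bl: "bilinear br" using lie unfolding lie_algebra_def by simp
  have f0h: "f0 \<in> annih h" and f0_min: "dim (stab br f0) = r_gh br h"
    using f0 unfolding annih_min_def by auto
  have lf0: "linear f0" and ll: "linear l" using f0h l unfolding annih_def by auto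
  let ?f = "\<lambda>t x. f0 x + t * l x"
  have stab_f: "stab br (?f t) = {v. stab_vec br f0 v + t *\<^sub>R stab_vec br l v = 0}" for t
    using stab_eq_kernel_stab_vec[OF _ bl] annih_add_scaled[OF f0h l, of t]
    unfolding annih_def by (simp add: stab_vec_add_scaled)
  have "l (br v Y) = 0" if "t \<noteq> 0" "stab_vec br f0 v + t *\<^sub>R stab_vec br l v = 0" for t v
  proof -
    have "v \<in> stab br (?f t)" using that(2) stab_f[of t] by simp
    then have "f0 (br v Y) + t * l (br v Y) = 0" by (simp add: mem_stab_iff)
    moreover have "f0 (br v Y) = 0"
      using Y lie_algebra_skew[OF lie, of v Y] linear_neg[OF lf0] by (simp add: mem_stab_iff)
    ultimately show ?thesis using that(1) by simp
  qed
  moreover note linear_form_bracket_left[OF ll bl, of Y]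
  moreover have "stab_vec br f0 X = 0"
    using X stab_eq_kernel_stab_vec[OF lf0 bl] by simp
  ultimately obtain t where "t \<noteq> 0"
    and "dim {v. stab_vec br f0 v + t *\<^sub>R stab_vec br l v = 0} < dim {v. stab_vec br f0 v = 0}"
    using dim_kernel_perturbation_less[OF linear_stab_vec[OF lf0 bl] linear_stab_vec[OF ll bl]]
      lXY by blast
  then have "dim (stab br (?f t)) < r_gh br h"
    using stab_f[of t] stab_eq_kernel_stab_vec[OF lf0 bl] f0_min by simp
  then show False
    using r_gh_le_dim_stab[OF annih_add_scaled[OF f0h l]] not_less by blast
qed

lemma mem_subspace_if_annih_vanishes:
  fixes h :: "'a::euclidean_space set"
  assumes h: "subspace h" and vanish: "\<And>l. l \<in> annih h \<Longrightarrow> l x = 0"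
  shows "x \<in> h"
proof -
  obtain u z where uz: "x = u + z" "u \<in> span h" "\<And>w. w \<in> span h \<Longrightarrow> orthogonal z w"
    using orthogonal_subspace_decomp_exists[of h x] by blast
  have "(\<lambda>v. z \<bullet> v) \<in> annih h"
    using uz(3) span_base unfolding annih_def orthogonal_def
    by (auto intro: linearI simp: inner_add_right)
  then have "z \<bullet> x = 0" by (rule vanish)
  moreover have "z \<bullet> u = 0" using uz(2,3) orthogonal_def by blast
  ultimately have "z = 0" using uz(1) by (simp add: inner_add_right)
  then show ?thesis using uz h span_eq_iff by (metis add.right_neutral)
qed

theorem lemma2p12:
  fixes br :: "'a::euclidean_space \<Rightarrow> 'a \<Rightarrow> 'a" and h :: "'a set" and f0 :: "'a \<Rightarrow> real"
  assumes "lie_algebra br" and "lie_subalgebra br h" and "f0 \<in> annih_min br h"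
  shows "span {br X Y | X Y. X \<in> stab br f0 \<and> Y \<in> stab br f0} \<subseteq> stab br f0 \<inter> h"
proof (rule span_minimal)
  have h: "subspace h" using assms(2) unfolding lie_subalgebra_def by simp
  have lf0: "linear f0" using assms(3) unfolding annih_min_def annih_def by simp
  have "bilinear br" using assms(1) unfolding lie_algebra_def by simp
  then show "subspace (stab br f0 \<inter> h)"
    using subspace_stab[OF lf0] h by (simp add: subspace_inter)
  have "br X Y \<in> stab br f0 \<inter> h" if "X \<in> stab br f0" "Y \<in> stab br f0" for X Y
    using stab_bracket_mem[OF assms(1) lf0 that] mem_subspace_if_annih_vanishes[OF h]
      annih_vanishes_on_stab_bracket[OF assms(1,3) _ that] by blast
  then show "{br X Y | X Y. X \<in> stab br f0 \<and> Y \<in> stab br f0} \<subseteq> stab br f0 \<inter> h"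
    by blast
qed

end
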